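(* For every odd integer $q>1$ there exists a $q$-ary $2$-frameproof code of length $4$ and cardinality $2(q-1)^2+1$.
   Context: For $P\subseteq F^l$ over a finite alphabet $F$, $desc(P)=\{x\in F^l: \text{for every } i\in\{1,\ldots,l\} \text{ there is } y\in P \text{ with } x_i=y_i\}$. For an integer $c\geq 2$, a $c$-frameproof code of length $l$ is a subset $C\subseteq F^l$ with $desc(P)\cap C=P$ for every $P\subseteq C$ with $|P|\leq c$; it is $q$-ary if $|F|=q$. *)

theory Defs
  imports Main
begin

definition words :: "'a set \<Rightarrow> nat \<Rightarrow> 'a list set" where
  "words F l = {x. length x = l \<and> set x \<subseteq> F}"

definition desc :: "'a set \<Rightarrow> nat \<Rightarrow> 'a list set \<Rightarrow> 'a list set" where
  "desc F l P = {x \<in> words F l. \<forall>i<l. \<exists>y\<in>P. x ! i = y ! i}"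

definition frameproof :: "nat \<Rightarrow> 'a set \<Rightarrow> nat \<Rightarrow> 'a list set \<Rightarrow> bool" where
  "frameproof c F l C \<longleftrightarrow> C \<subseteq> words F l \<and>
     (\<forall>P. P \<subseteq> C \<and> card P \<le> c \<longrightarrow> desc F l P \<inter> C = P)"

end

theory Submission
  imports Defs "HOL-Number_Theory.Cong"
begin

text \<open>
  Let \<open>N = q - 1\<close>, which is even. The alphabet consists of the residues \<open>0, \<dots>, N - 1\<close>
  and one extra symbol, encoded as \<open>N\<close>. Besides the constant word \<open>(N, N, N, N)\<close>, the code
  contains, for every position \<open>p\<close> of the extra symbol, the words that carry in positions
  \<open>p + 1, p + 2, p + 3 (mod 4)\<close> the residues of a near progression \<open>u, u + d, u + 2d + e\<^sub>p\<close>,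
  where \<open>u\<close> ranges over all residues and \<open>d\<close> over a window of \<open>N / 2\<close> consecutive integers;
  this gives \<open>4 \<cdot> N \<cdot> N / 2 + 1 = 2(q - 1)\<^sup>2 + 1\<close> words.

  Two of these words never agree in two of the three positions where the first one is finite:
  within one family, two terms of a progression determine it because \<open>d\<close> is confined to half a
  period; for neighbouring families \<open>p\<close>, \<open>p + 1\<close> agreement would force \<open>d + e\<^sub>p \<equiv> d'\<close>, but the
  windows are arranged to be complementary modulo \<open>N\<close>; for opposite families it would force
  \<open>2d + e\<^sub>p \<equiv> -(2d' + e\<^sub>p\<^sub>+\<^sub>2)\<close>, impossible as \<open>e\<^sub>p + e\<^sub>p\<^sub>+\<^sub>2\<close> is odd and \<open>N\<close> even. The
  constant word agrees with any other word only where that word has its extra symbol. Hence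
  any two other words together cover at most two of three (resp. four) positions of a word,
  which leaves a position that betrays it.
\<close>

lemma cong_imp_eq_in_window:
  fixes u v lo n :: int
  assumes "lo \<le> u" "u < lo + n" "lo \<le> v" "v < lo + n" "[u = v] (mod n)"
  shows "u = v"
proof -
  have "[u - lo = v - lo] (mod n)"
    using assms(5) by (rule cong_diff) simp
  then show ?thesis
    using cong_less_imp_eq_int[of "u - lo" n "v - lo"] assms(1-4) by simp
qed

lemma cong_double_imp_eq_in_window:
  fixes u v lo m :: int
  assumes "lo \<le> u" "u < lo + m" "lo \<le> v" "v < lo + m" "[2 * u = 2 * v] (mod 2 * m)"
  shows "u = v"
proof -
  have "2 * m dvd 2 * (u - v)"
    using assms(5) by (simp add: cong_iff_dvd_diff right_diff_distrib)
  then have "[u = v] (mod m)"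
    unfolding cong_iff_dvd_diff by (simp only: dvd_mult_cancel_left) simp
  then show ?thesis
    using cong_imp_eq_in_window assms(1-4) by blast
qed

lemma cong_even_modulus_imp_even_iff:
  fixes x y n :: int
  assumes "even n" "[x = y] (mod n)"
  shows "even x \<longleftrightarrow> even y"
proof -
  have "[x = y] (mod 2)"
    using cong_dvd_modulus[OF assms(2)] assms(1) by blast
  then show ?thesis
    by (simp add: cong_def even_iff_mod_2_eq_zero)
qed

lemma pigeonhole_cover:
  fixes A :: "'a \<Rightarrow> 'b set"
  assumes "finite I" "card I \<le> c" "T = (\<Union>i\<in>I. A i)" "T \<noteq> {}"
  shows "\<exists>i\<in>I. card T \<le> c * card (A i)"
proof (rule ccontr)
  assume "\<not> ?thesis"
  then have small: "c * card (A i) < card T" if "i \<in> I" for i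
    using that by (simp add: not_le)
  have "I \<noteq> {}"
    using assms(3,4) by blast
  have "c * card T \<le> c * (\<Sum>i\<in>I. card (A i))"
    unfolding assms(3) using card_UN_le[OF assms(1)] by (rule mult_le_mono2)
  also have "\<dots> = (\<Sum>i\<in>I. c * card (A i))"
    by (simp add: sum_distrib_left)
  also have "\<dots> < (\<Sum>i\<in>I. card T)"
    using assms(1) \<open>I \<noteq> {}\<close> small by (rule sum_strict_mono)
  also have "\<dots> \<le> c * card T"
    using assms(2) by (simp add: mult_le_mono1)
  finally show False
    by simp
qed

lemma frameproofI_separating_positions:
  assumes words: "C \<subseteq> words F l" and fin: "finite C"
    and sep: "\<And>x. x \<in> C \<Longrightarrow> \<exists>T \<subseteq> {..<l}. T \<noteq> {} \<and>
                 (\<forall>y \<in> C - {x}. c * card {i \<in> T. y ! i = x ! i} < card T)"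
  shows "frameproof c F l C"
  unfolding frameproof_def
proof (intro conjI allI impI)
  show "C \<subseteq> words F l"
    by (fact words)
  fix P assume P: "P \<subseteq> C \<and> card P \<le> c"
  have "x \<in> P" if x: "x \<in> desc F l P \<inter> C" for x
  proof (rule ccontr)
    assume "x \<notin> P"
    from x have "x \<in> C"
      by blast
    from sep[OF this] obtain T where T: "T \<subseteq> {..<l}" "T \<noteq> {}"
      and few: "\<forall>y \<in> C - {x}. c * card {i \<in> T. y ! i = x ! i} < card T"
      by blast
    have finP: "finite P"
      using P fin finite_subset by blast
    have "\<forall>i<l. \<exists>y\<in>P. x ! i = y ! i"
      using x by (simp add: desc_def)
    then have "T \<subseteq> (\<Union>y\<in>P. {i \<in> T. y ! i = x ! i})"
      using T(1) by fastforce
    then have T_eq: "T = (\<Union>y\<in>P. {i \<in> T. y ! i = x ! i})"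
      by blast
    obtain y where y: "y \<in> P" "card T \<le> c * card {i \<in> T. y ! i = x ! i}"
      using pigeonhole_cover[OF finP conjunct2[OF P] T_eq T(2)] by blast
    have "y \<in> C - {x}"
      using P y(1) \<open>x \<notin> P\<close> by blast
    with few have "c * card {i \<in> T. y ! i = x ! i} < card T"
      by blast
    with y(2) show False
      by linarith
  qed
  moreover have "P \<subseteq> desc F l P \<inter> C"
    using P words unfolding desc_def by blast
  ultimately show "desc F l P \<inter> C = P"
    by blast
qed

lemma inj_on_map_words:
  assumes "inj_on f F"
  shows "inj_on (map f) (words F l)"
proof (rule inj_onI)
  fix x y assume "x \<in> words F l" "y \<in> words F l" "map f x = map f y"
  moreover from \<open>x \<in> words F l\<close> \<open>y \<in> words F l\<close> have "inj_on f (set x \<union> set y)"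
    using assms by (auto simp: words_def intro: inj_on_subset)
  ultimately show "x = y"
    by (simp add: inj_on_map_eq_map)
qed

lemma desc_map_imp_desc:
  assumes inj: "inj_on f F" and x: "x \<in> words F l" and P: "P \<subseteq> words F l"
    and fx: "map f x \<in> desc (f ` F) l (map f ` P)"
  shows "x \<in> desc F l P"
  unfolding desc_def
proof (intro CollectI conjI allI impI)
  show "x \<in> words F l"
    by (fact x)
  fix i assume i: "i < l"
  then obtain y where y: "y \<in> P" "map f x ! i = map f y ! i"
    using fx unfolding desc_def by blast
  have "y \<in> words F l"
    using P y(1) by blast
  then have "x ! i \<in> F" "y ! i \<in> F" "length x = l" "length y = l"
    using x i unfolding words_def by (auto intro!: nth_mem)
  then have "x ! i = y ! i"
    using y(2) i inj by (auto dest: inj_onD)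
  then show "\<exists>y\<in>P. x ! i = y ! i"
    using y(1) by blast
qed

lemma frameproof_map:
  assumes inj: "inj_on f F" and fp: "frameproof c F l C"
  shows "frameproof c (f ` F) l (map f ` C)"
  unfolding frameproof_def
proof (intro conjI allI impI)
  have C: "C \<subseteq> words F l"
    using fp by (simp add: frameproof_def)
  show image_words: "map f ` C \<subseteq> words (f ` F) l"
  proof
    fix x' assume "x' \<in> map f ` C"
    then obtain x where "x' = map f x" "length x = l" "set x \<subseteq> F"
      using C unfolding words_def by blast
    then show "x' \<in> words (f ` F) l"
      by (simp add: words_def image_mono)
  qed
  fix P' assume P': "P' \<subseteq> map f ` C \<and> card P' \<le> c"
  define P where "P = C \<inter> map f -` P'"
  have "P \<subseteq> C" and P'_eq: "P' = map f ` P"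
    using P' unfolding P_def by blast+
  have "card P = card P'"
    unfolding P'_eq using inj_on_map_words[OF inj] \<open>P \<subseteq> C\<close> C
    by (intro card_image[symmetric]) (blast intro: inj_on_subset)
  then have fpP: "desc F l P \<inter> C = P"
    using fp P' \<open>P \<subseteq> C\<close> unfolding frameproof_def by simp
  have "x' \<in> P'" if x': "x' \<in> desc (f ` F) l P' \<inter> map f ` C" for x'
  proof -
    from x' obtain x where x: "x \<in> C" "x' = map f x"
      by blast
    have "x \<in> desc F l P"
      using desc_map_imp_desc[OF inj, of x l P] x x' P'_eq C \<open>P \<subseteq> C\<close> by blast
    then show "x' \<in> P'"
      using fpP x P'_eq by blast
  qed
  moreover have "P' \<subseteq> desc (f ` F) l P' \<inter> map f ` C"
    using P' image_words unfolding desc_def by blast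
  ultimately show "desc (f ` F) l P' \<inter> map f ` C = P'"
    by blast
qed

lemma pairs_below_three:
  fixes r s :: nat
  assumes "r < s" "s < 3"
  obtains "r = 0" "s = 1" | "r = 0" "s = 2" | "r = 1" "s = 2"
  using assms by linarith

definition near_progression :: "int \<Rightarrow> int \<Rightarrow> int \<Rightarrow> int list" where
  "near_progression u d e = [u, u + d, u + 2 * d + e]"

lemma near_progression_determined:
  fixes u u' d d' e lo m :: int
  assumes d: "lo \<le> d" "d < lo + m" "lo \<le> d'" "d' < lo + m"
    and rs: "r < s" "s < 3"
    and agree: "[near_progression u d e ! r = near_progression u' d' e ! r] (mod 2 * m)"
      "[near_progression u d e ! s = near_progression u' d' e ! s] (mod 2 * m)"
  shows "d = d' \<and> [u = u'] (mod 2 * m)"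
proof -
  have eq_of_cong: "d = d'" if "[d = d'] (mod 2 * m)"
    using cong_imp_eq_in_window[OF _ _ _ _ that, of lo] d by simp
  from rs show ?thesis
  proof (cases rule: pairs_below_three)
    case 1
    then have c0: "[u = u'] (mod 2 * m)" and c1: "[u + d = u' + d'] (mod 2 * m)"
      using agree by (simp_all add: near_progression_def)
    have "[d = d'] (mod 2 * m)"
      using cong_diff[OF c1 c0] by simp
    then show ?thesis
      using eq_of_cong c0 by blast
  next
    case 2
    then have c0: "[u = u'] (mod 2 * m)" and c2: "[u + 2 * d + e = u' + 2 * d' + e] (mod 2 * m)"
      using agree by (simp_all add: near_progression_def)
    have "[2 * d = 2 * d'] (mod 2 * m)"
      using cong_diff[OF c2 c0] by (simp add: cong_add_rcancel)
    then show ?thesis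
      using cong_double_imp_eq_in_window[of lo d m d'] d c0 by simp
  next
    case 3
    then have c1: "[u + d = u' + d'] (mod 2 * m)" and c2: "[u + 2 * d + e = u' + 2 * d' + e] (mod 2 * m)"
      using agree by (simp_all add: near_progression_def numeral_2_eq_2)
    have "[d + e = d' + e] (mod 2 * m)"
      using cong_diff[OF c2 c1] by (simp add: algebra_simps)
    then have "d = d'"
      using eq_of_cong by (simp add: cong_add_rcancel)
    then show ?thesis
      using c1 by (simp add: cong_add_rcancel)
  qed
qed

text \<open>
  The shifts and windows satisfy \<open>fp_start N (p + 1) \<equiv> fp_start N p + fp_shift p + N / 2
  (mod N)\<close>, so that \<open>fp_window N p + fp_shift p\<close> and \<open>fp_window N (p + 1)\<close> are complementary
  modulo \<open>N\<close>, and \<open>fp_shift p + fp_shift (p + 2)\<close> is odd.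
\<close>

definition fp_shift :: "nat \<Rightarrow> int" where
  "fp_shift p = (if p = 1 then 1 else if p = 2 then -1 else 0)"

definition fp_start :: "int \<Rightarrow> nat \<Rightarrow> int" where
  "fp_start N p = (if p = 0 then N div 2 else if p = 2 then N div 2 + 1 else 0)"

abbreviation fp_window :: "int \<Rightarrow> nat \<Rightarrow> int set" where
  "fp_window N p \<equiv> {fp_start N p..<fp_start N p + N div 2}"

definition fp_base :: "int \<Rightarrow> nat \<Rightarrow> int \<Rightarrow> int \<Rightarrow> int list" where
  "fp_base N p u d = map (\<lambda>t. t mod N) (near_progression u d (fp_shift p)) @ [N]"

definition fp_word :: "int \<Rightarrow> nat \<Rightarrow> int \<Rightarrow> int \<Rightarrow> int list" where
  "fp_word N p u d = rotate (3 - p) (fp_base N p u d)"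

definition fp_params :: "int \<Rightarrow> (nat \<times> int \<times> int) set" where
  "fp_params N = (SIGMA p:{..<4}. {0..<N} \<times> fp_window N p)"

definition fp_code :: "int \<Rightarrow> int list set" where
  "fp_code N = (\<lambda>(p, u, d). fp_word N p u d) ` fp_params N \<union> {replicate 4 N}"

lemma less_4_cases:
  fixes n :: nat
  assumes "n < 4"
  obtains "n = 0" | "n = 1" | "n = 2" | "n = 3"
  using assms by linarith

lemma fp_base_nth:
  "r < 4 \<Longrightarrow> fp_base N p u d ! r = (if r = 3 then N else near_progression u d (fp_shift p) ! r mod N)"
  by (auto simp: fp_base_def near_progression_def nth_append elim: less_4_cases)

lemma fp_base_nth_neq:
  assumes "0 < N" "r < 3"
  shows "fp_base N p u d ! r \<noteq> N"
proof -
  have "v mod N \<noteq> N" for v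
    using pos_mod_bound[OF assms(1), of v] by linarith
  then show ?thesis
    using assms(2) by (simp add: fp_base_nth)
qed

lemma rotation_index:
  fixes p k r :: nat
  assumes "p < 4" "k < 4" "r < 4"
  shows "(3 - (p + k) mod 4 + (p + 1 + r) mod 4) mod 4 = (r + 4 - k) mod 4"
  using assms by (elim less_4_cases) simp_all

lemma fp_word_nth_shifted:
  assumes "p < 4" "k < 4" "r < 4"
  shows "fp_word N ((p + k) mod 4) u d ! ((p + 1 + r) mod 4) =
    fp_base N ((p + k) mod 4) u d ! ((r + 4 - k) mod 4)"
  using rotation_index[OF assms]
  by (simp add: fp_word_def nth_rotate fp_base_def near_progression_def)

lemma fp_word_nth:
  assumes "p < 4" "r < 4"
  shows "fp_word N p u d ! ((p + 1 + r) mod 4) = fp_base N p u d ! r"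
  using fp_word_nth_shifted[of p 0 r] assms by simp

lemma fp_word_nth_eq_N_iff:
  assumes "0 < N" "p < 4" "i < 4"
  shows "fp_word N p u d ! i = N \<longleftrightarrow> i = p"
proof -
  let ?j = "(3 - p + i) mod 4"
  have nth: "fp_word N p u d ! i = fp_base N p u d ! ?j"
    using assms(3) by (simp add: fp_word_def nth_rotate fp_base_def near_progression_def)
  have j: "?j = 3 \<longleftrightarrow> i = p"
    using assms(2,3) by (elim less_4_cases) simp_all
  show ?thesis
  proof (cases "i = p")
    case True
    then show ?thesis
      using nth j fp_base_nth[of 3 N p u d] by simp
  next
    case False
    then have "?j < 3"
      using j by simp
    then show ?thesis
      using nth False fp_base_nth_neq[OF assms(1)] by simp
  qed
qed

lemma fp_window_adjacent:
  assumes "even N" "p < 4" "d \<in> fp_window N p" "d' \<in> fp_window N ((p + 1) mod 4)"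
    and cong: "[d + fp_shift p = d'] (mod N)"
  shows False
proof -
  have N_half: "2 * (N div 2) = N"
    using assms(1) by simp
  from assms(2) show False
    using cong_imp_eq_in_window[OF _ _ _ _ cong, of 0] cong_imp_eq_in_window[OF _ _ _ _ cong, of 1]
      assms(3,4) N_half
    by (cases rule: less_4_cases) (simp_all add: fp_start_def fp_shift_def)
qed

lemma fp_shift_opposite:
  "p < 4 \<Longrightarrow> odd (fp_shift p + fp_shift ((p + 2) mod 4))"
  by (elim less_4_cases) (simp_all add: fp_shift_def)

lemma fp_adjacent_disagree:
  assumes N: "even N" and p: "p < 4"
    and d: "d \<in> fp_window N p" "d' \<in> fp_window N ((p + 1) mod 4)"
    and agree: "[u + d = u'] (mod N)" "[u + 2 * d + fp_shift p = u' + d'] (mod N)"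
  shows False
proof -
  have "[d + fp_shift p = d'] (mod N)"
    using cong_diff[OF agree(2) agree(1)] by (simp add: algebra_simps)
  then show False
    using fp_window_adjacent[OF N p d] by blast
qed

lemma fp_opposite_disagree:
  assumes N: "even N" and p: "p < 4"
    and agree: "[u = u' + 2 * d' + fp_shift ((p + 2) mod 4)] (mod N)"
      "[u + 2 * d + fp_shift p = u'] (mod N)"
  shows False
proof -
  let ?e = "fp_shift p" and ?e' = "fp_shift ((p + 2) mod 4)"
  have "[2 * d + ?e = - (2 * d' + ?e')] (mod N)"
    using cong_diff[OF agree(2) agree(1)] by (simp add: algebra_simps)
  from cong_even_modulus_imp_even_iff[OF N this] have "even ?e \<longleftrightarrow> even ?e'"
    by simp
  then show False
    using fp_shift_opposite[OF p] by simp
qed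

lemma fp_word_agree_imp_cong:
  assumes N: "0 < N" and p: "p < 4" and k: "k < 4" and t: "t < 3"
    and agree: "fp_word N p u d ! ((p + 1 + t) mod 4) = fp_word N ((p + k) mod 4) u' d' ! ((p + 1 + t) mod 4)"
  shows "(t + 4 - k) mod 4 \<noteq> 3"
    and "[near_progression u d (fp_shift p) ! t =
          near_progression u' d' (fp_shift ((p + k) mod 4)) ! ((t + 4 - k) mod 4)] (mod N)"
proof -
  let ?p' = "(p + k) mod 4" and ?x = "near_progression u d (fp_shift p)"
  have "?x ! t mod N = fp_base N ?p' u' d' ! ((t + 4 - k) mod 4)"
    using agree fp_word_nth[OF p, of t] fp_word_nth_shifted[OF p k, of t] t by (simp add: fp_base_nth)
  moreover have "?x ! t mod N \<noteq> N"
    using pos_mod_bound[OF N, of "?x ! t"] by linarith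
  ultimately show "(t + 4 - k) mod 4 \<noteq> 3"
    and "[?x ! t = near_progression u' d' (fp_shift ?p') ! ((t + 4 - k) mod 4)] (mod N)"
    using fp_base_nth[of 3 N ?p' u' d'] fp_base_nth[of "(t + 4 - k) mod 4" N ?p' u' d']
    by (auto simp: cong_def)
qed

lemma fp_word_agree_twice:
  assumes N: "even N" and p: "p < 4" and k: "k < 4"
    and u: "u \<in> {0..<N}" "u' \<in> {0..<N}"
    and d: "d \<in> fp_window N p" "d' \<in> fp_window N ((p + k) mod 4)"
    and rs: "r < s" "s < 3"
    and agree: "fp_word N p u d ! ((p + 1 + r) mod 4) = fp_word N ((p + k) mod 4) u' d' ! ((p + 1 + r) mod 4)"
      "fp_word N p u d ! ((p + 1 + s) mod 4) = fp_word N ((p + k) mod 4) u' d' ! ((p + 1 + s) mod 4)"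
  shows "k = 0 \<and> u = u' \<and> d = d'"
proof -
  define p' where "p' = (p + k) mod 4"
  have pos: "0 < N"
    using u by simp
  note agree_r = fp_word_agree_imp_cong[OF pos p k _ agree(1)]
    and agree_s = fp_word_agree_imp_cong[OF pos p k _ agree(2)]
  have idx: "(r + 4 - k) mod 4 \<noteq> 3" "(s + 4 - k) mod 4 \<noteq> 3"
    using agree_r(1) agree_s(1) rs by simp_all
  from k show ?thesis
  proof (cases rule: less_4_cases)
    case 1
    have N_eq: "2 * (N div 2) = N"
      using N by simp
    have "d = d' \<and> [u = u'] (mod 2 * (N div 2))"
      using near_progression_determined[of "fp_start N p" d "N div 2" d' r s] agree_r(2) agree_s(2)
        d rs 1 p N_eq by simp
    then show ?thesis
      using cong_less_imp_eq_int[of u N u'] u N_eq 1 by simp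
  next
    case 2
    have "r = 1 \<and> s = 2"
      using idx 2 by (cases rule: pairs_below_three[OF rs]) simp_all
    then show ?thesis
      using agree_r(2) agree_s(2) fp_adjacent_disagree[OF N p d[unfolded 2]] 2
      by (simp add: near_progression_def)
  next
    case 3
    have "r = 0 \<and> s = 2"
      using idx 3 by (cases rule: pairs_below_three[OF rs]) simp_all
    then show ?thesis
      using agree_r(2) agree_s(2) fp_opposite_disagree[OF N p] 3
      by (simp add: near_progression_def)
  next
    case 4
    have "(p' + 1) mod 4 = p" "p' < 4"
      using p 4 by (auto simp: p'_def elim: less_4_cases)
    moreover have "r = 0 \<and> s = 1"
      using idx 4 by (cases rule: pairs_below_three[OF rs]) simp_all
    ultimately show ?thesis
      using agree_r(2) agree_s(2) fp_adjacent_disagree[OF N \<open>p' < 4\<close>, of d' d u' u] d 4 p'_def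
      by (simp add: near_progression_def cong_sym_eq)
  qed
qed

lemma fp_word_in_words:
  assumes "0 < N"
  shows "fp_word N p u d \<in> words {0..N} 4"
proof -
  have "t mod N \<in> {0..N}" for t
    using pos_mod_sign[OF assms, of t] pos_mod_bound[OF assms, of t] by simp
  then show ?thesis
    using assms by (auto simp: words_def fp_word_def fp_base_def near_progression_def)
qed

lemma fp_code_subset_words:
  assumes "0 < N"
  shows "fp_code N \<subseteq> words {0..N} 4"
proof
  fix x assume "x \<in> fp_code N"
  then show "x \<in> words {0..N} 4"
    unfolding fp_code_def using fp_word_in_words[OF assms] assms by (auto simp: words_def)
qed

lemma fp_word_inject:
  assumes N: "even N" and p: "p < 4" "p' < 4" and u: "u \<in> {0..<N}" "u' \<in> {0..<N}"
    and d: "d \<in> fp_window N p" "d' \<in> fp_window N p'"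
    and eq: "fp_word N p u d = fp_word N p' u' d'"
  shows "p = p' \<and> u = u' \<and> d = d'"
proof -
  have pos: "0 < N"
    using u by simp
  have "fp_word N p' u' d' ! p = N"
    using fp_word_nth_eq_N_iff[OF pos p(1) p(1), of u d] eq by simp
  then have "p = p'"
    using fp_word_nth_eq_N_iff[OF pos p(2)] p(1) by simp
  moreover have "u = u' \<and> d = d'"
    using fp_word_agree_twice[OF N p(1), of 0 u u' d d' 0 1] \<open>p = p'\<close> p u d eq by simp
  ultimately show ?thesis
    by simp
qed

lemma fp_word_neq_replicate:
  assumes "0 < N" "p < 4"
  shows "fp_word N p u d \<noteq> replicate 4 N"
proof -
  have "(p + 1) mod 4 \<noteq> p"
    using assms(2) by (elim less_4_cases) simp_all
  then have "fp_word N p u d ! ((p + 1) mod 4) \<noteq> N"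
    using fp_word_nth_eq_N_iff[OF assms] by simp
  then show ?thesis
    by auto
qed

lemma card_fp_code:
  assumes N: "even N" "0 < N"
  shows "card (fp_code N) = 2 * nat N ^ 2 + 1"
proof -
  let ?w = "\<lambda>(p, u, d). fp_word N p u d"
  have "inj_on ?w (fp_params N)"
    using fp_word_inject[OF N(1)] by (auto simp: fp_params_def inj_on_def)
  moreover have "card (fp_params N) = 4 * (nat N * nat (N div 2))"
    by (simp add: fp_params_def card_SigmaI card_cartesian_product)
  moreover obtain m where "N = 2 * m"
    using N(1) by blast
  then have "4 * (nat N * nat (N div 2)) = 2 * nat N ^ 2"
    using N(2) by (simp add: nat_mult_distrib power2_eq_square)
  ultimately have "card (?w ` fp_params N) = 2 * nat N ^ 2"
    by (simp add: card_image)
  moreover have "replicate 4 N \<notin> ?w ` fp_params N"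
  proof
    assume "replicate 4 N \<in> ?w ` fp_params N"
    then obtain p u d where "p < 4" "fp_word N p u d = replicate 4 N"
      by (auto simp: fp_params_def)
    with fp_word_neq_replicate[OF N(2)] show False
      by blast
  qed
  moreover have "finite (fp_params N)"
    by (simp add: fp_params_def)
  ultimately show ?thesis
    unfolding fp_code_def by simp
qed

lemma position_offset:
  fixes i p :: nat
  assumes "p < 4" "i < 4" "i \<noteq> p"
  obtains r where "r < 3" "i = (p + 1 + r) mod 4"
proof
  show "(i + 3 - p) mod 4 < 3"
    using assms by (elim less_4_cases) simp_all
  show "i = (p + 1 + (i + 3 - p) mod 4) mod 4"
    using assms by (elim less_4_cases) simp_all
qed

lemma offset_position_neq:
  fixes p r :: nat
  assumes "p < 4" "r < 3"
  shows "(p + 1 + r) mod 4 \<noteq> p"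
proof -
  have "r < 4"
    using assms(2) by simp
  with assms show ?thesis
    by (elim less_4_cases) simp_all
qed

lemma fp_code_agree_twice:
  assumes N: "even N" and x: "(p, u, d) \<in> fp_params N"
    and y: "y \<in> fp_code N" "y \<noteq> fp_word N p u d"
    and rs: "r < s" "s < 3"
    and agree: "fp_word N p u d ! ((p + 1 + r) mod 4) = y ! ((p + 1 + r) mod 4)"
      "fp_word N p u d ! ((p + 1 + s) mod 4) = y ! ((p + 1 + s) mod 4)"
  shows False
proof -
  have p: "p < 4" and u: "u \<in> {0..<N}" and d: "d \<in> fp_window N p"
    using x by (auto simp: fp_params_def)
  from y(1) consider (word) p' u' d' where "(p', u', d') \<in> fp_params N" "y = fp_word N p' u' d'"
    | (all_extra) "y = replicate 4 N"
    by (auto simp: fp_code_def)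
  then show False
  proof cases
    case word
    then have p': "p' < 4" "u' \<in> {0..<N}" "d' \<in> fp_window N p'"
      by (auto simp: fp_params_def)
    define k where "k = (p' + 4 - p) mod 4"
    have "k < 4"
      by (simp add: k_def)
    have "p' = (p + k) mod 4"
      using p p'(1) unfolding k_def by (elim less_4_cases) simp_all
    then have "k = 0 \<and> u = u' \<and> d = d'"
      using fp_word_agree_twice[OF N p \<open>k < 4\<close> u p'(2) d _ rs] p'(3) agree word by simp
    then show False
      using y(2) word \<open>p' = (p + k) mod 4\<close> p by simp
  next
    case all_extra
    have "(p + 1 + r) mod 4 \<noteq> p"
      using offset_position_neq p rs by simp
    moreover have "fp_word N p u d ! ((p + 1 + r) mod 4) = N"
      using agree(1) all_extra by simp
    ultimately show False
      using fp_word_nth_eq_N_iff[of N p "(p + 1 + r) mod 4" u d] p u by simp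
  qed
qed

lemma card_agreements_fp_word_le1:
  assumes N: "even N" and x: "(p, u, d) \<in> fp_params N"
    and y: "y \<in> fp_code N" "y \<noteq> fp_word N p u d"
  shows "card {i \<in> {..<4} - {p}. y ! i = fp_word N p u d ! i} \<le> 1"
proof -
  let ?x = "fp_word N p u d"
  let ?A = "{i \<in> {..<4} - {p}. y ! i = ?x ! i}"
  have p: "p < 4"
    using x by (simp add: fp_params_def)
  have offsets_eq: "r = s"
    if rs: "r < 3" "s < 3" and agree: "?x ! ((p + 1 + r) mod 4) = y ! ((p + 1 + r) mod 4)"
      "?x ! ((p + 1 + s) mod 4) = y ! ((p + 1 + s) mod 4)" for r s
    using fp_code_agree_twice[OF N x y _ rs(2) agree] fp_code_agree_twice[OF N x y _ rs(1) agree(2,1)]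
    by (cases r s rule: linorder_cases) auto
  have same: "i = j" if "i \<in> ?A" "j \<in> ?A" for i j
  proof -
    have "i < 4" "i \<noteq> p" "j < 4" "j \<noteq> p"
      using that by auto
    obtain r where r: "r < 3" "i = (p + 1 + r) mod 4"
      by (rule position_offset[OF p \<open>i < 4\<close> \<open>i \<noteq> p\<close>])
    obtain s where s: "s < 3" "j = (p + 1 + s) mod 4"
      by (rule position_offset[OF p \<open>j < 4\<close> \<open>j \<noteq> p\<close>])
    have "r = s"
      using offsets_eq[OF r(1) s(1)] that r(2) s(2) by simp
    then show "i = j"
      using r s by simp
  qed
  have "finite ?A"
    by simp
  moreover have "\<forall>i\<in>?A. \<forall>j\<in>?A. i = j"
    using same by (intro ballI)
  ultimately show ?thesis
    by (simp only: One_nat_def card_le_Suc0_iff_eq)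
qed

lemma card_agreements_replicate_le1:
  assumes N: "0 < N" and y: "y \<in> fp_code N" "y \<noteq> replicate 4 N"
  shows "card {i \<in> {..<4}. y ! i = replicate 4 N ! i} \<le> 1"
proof -
  obtain p u d where "p < 4" "y = fp_word N p u d"
    using y by (auto simp: fp_code_def fp_params_def)
  then have "{i \<in> {..<4}. y ! i = replicate 4 N ! i} \<subseteq> {p}"
    using fp_word_nth_eq_N_iff[OF N] by auto
  then show ?thesis
    using card_mono[of "{p}"] by simp
qed

lemma fp_code_separating:
  assumes N: "even N" "0 < N" and x: "x \<in> fp_code N"
  shows "\<exists>T \<subseteq> {..<4}. T \<noteq> {} \<and> (\<forall>y \<in> fp_code N - {x}. 2 * card {i \<in> T. y ! i = x ! i} < card T)"
proof -
  from x consider (word) p u d where "(p, u, d) \<in> fp_params N" "x = fp_word N p u d"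
    | (all_extra) "x = replicate 4 N"
    by (auto simp: fp_code_def)
  then show ?thesis
  proof cases
    case word
    then have "p < 4"
      by (simp add: fp_params_def)
    have "2 * card {i \<in> {..<4} - {p}. y ! i = x ! i} < card ({..<4} - {p})"
      if "y \<in> fp_code N - {x}" for y
      using card_agreements_fp_word_le1[OF N(1) word(1), of y] that word(2) \<open>p < 4\<close> by simp
    moreover have "(p + 1) mod 4 \<in> {..<4} - {p}"
      using offset_position_neq[of p 0] \<open>p < 4\<close> by simp
    ultimately show ?thesis
      by (intro exI[of _ "{..<4} - {p}"] conjI Diff_subset ballI) blast+
  next
    case all_extra
    have "2 * card {i \<in> {..<4}. y ! i = x ! i} < card {..<4::nat}"
      if "y \<in> fp_code N - {x}" for y
      using card_agreements_replicate_le1[OF N(2), of y] that all_extra by simp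
    moreover have "0 \<in> {..<4::nat}"
      by simp
    ultimately show ?thesis
      by (intro exI[of _ "{..<4}"] conjI ballI subset_refl) blast+
  qed
qed

lemma fp_code_frameproof:
  assumes "even N" "0 < N"
  shows "frameproof 2 {0..N} 4 (fp_code N)"
  using fp_code_subset_words[OF assms(2)] _ fp_code_separating[OF assms]
  by (rule frameproofI_separating_positions) (simp add: fp_code_def fp_params_def)

theorem theorem2:
  fixes q :: nat
  assumes "odd q" and "q > 1"
  shows "\<exists>(F :: nat set) C. finite F \<and> card F = q \<and> frameproof 2 F 4 C \<and>
           card C = 2 * (q - 1)^2 + 1"
proof -
  define N where "N = int q - 1"
  have N: "even N" "0 < N"
    using assms by (simp_all add: N_def)
  have inj: "inj_on nat {0..N}"
    by (rule inj_onI) (simp add: eq_nat_nat_iff)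
  have "frameproof 2 (nat ` {0..N}) 4 (map nat ` fp_code N)"
    using frameproof_map[OF inj fp_code_frameproof[OF N]] .
  moreover have "card (nat ` {0..N}) = q"
    using card_image[OF inj] by (simp add: N_def)
  moreover have "card (map nat ` fp_code N) = 2 * (q - 1)^2 + 1"
    using card_image[OF inj_on_subset[OF inj_on_map_words[OF inj] fp_code_subset_words[OF N(2)]]]
      card_fp_code[OF N] by (simp add: N_def nat_diff_distrib)
  ultimately show ?thesis
    by blast
qed

end
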